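(* Let $S$ be a countable discrete inverse semigroup with identity and $\alpha\colon S\to\mathcal I(X)$ a representation. The following are equivalent: (1) $X$ is $S$-domain measurable; (2) $X$ is not $S$-paradoxical; (3) $X$ is $S$-domain F\o lner.
   Context: Inverse semigroup: each $s$ has a unique $s^*$ with $ss^*s=s$, $s^*ss^*=s^*$. A representation is a unital homomorphism $\alpha\colon S\to\mathcal I(X)$ into the inverse semigroup of partial bijections of $X$; $D_{s^*s}$ denotes the domain of $\alpha_s$, and $\alpha_s\colon D_{s^*s}\to D_{ss^*}$ is a bijection. Measures are finitely additive maps $\mathcal P(X)\to[0,\infty]$. For $A\subseteq X$: $A$ is $S$-domain measurable if some measure $\mu$ has $\mu(A)=1$ and $\mu(B)=\mu(\alpha_s(B))$ for all $s\in S$, $B\subseteq D_{s^*s}$; $A$ is $S$-domain F\o lner if there are finite non-empty $F_n\subseteq A$ with $|\alpha_s(F_n\cap D_{s^*s})\setminus F_n|/|F_n|\to0$ for all $s$; $A$ is $S$-paradoxical if there are $A_i,B_j\subseteq X$, $s_i,t_j\in S$ ($i\le n$, $j\le m$) with $A_i\subseteq D_{s_i^*s_i}$, $B_j\subseteq D_{t_j^*t_j}$ and $A=\bigsqcup_i\alpha_{s_i}(A_i)=\bigsqcup_j\alpha_{t_j}(B_j)\supseteq A_1\sqcup\dots\sqcup A_n\sqcup B_1\sqcup\dots\sqcup B_m$. *)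

theory Defs
  imports "HOL-Analysis.Analysis"
begin

definition inverse_monoid :: "'s set \<Rightarrow> ('s \<Rightarrow> 's \<Rightarrow> 's) \<Rightarrow> 's \<Rightarrow> bool" where
  "inverse_monoid S m e \<longleftrightarrow>
     (\<forall>a\<in>S. \<forall>b\<in>S. m a b \<in> S) \<and>
     (\<forall>a\<in>S. \<forall>b\<in>S. \<forall>c\<in>S. m (m a b) c = m a (m b c)) \<and>
     e \<in> S \<and> (\<forall>a\<in>S. m e a = a \<and> m a e = a) \<and>
     (\<forall>s\<in>S. \<exists>!t. t \<in> S \<and> m (m s t) s = s \<and> m (m t s) t = t)"

definition partial_bij :: "'x set \<Rightarrow> ('x \<Rightarrow> 'x option) \<Rightarrow> bool" where
  "partial_bij X f \<longleftrightarrow> dom f \<subseteq> X \<and> ran f \<subseteq> X \<and> inj_on f (dom f)"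

definition id_on :: "'x set \<Rightarrow> ('x \<Rightarrow> 'x option)" where
  "id_on X = (\<lambda>x. if x \<in> X then Some x else None)"

text \<open>Unital representation \<alpha> : S \<rightarrow> I(X); product in I(X) is composition (first apply t, then s).\<close>
definition representation ::
  "'s set \<Rightarrow> ('s \<Rightarrow> 's \<Rightarrow> 's) \<Rightarrow> 's \<Rightarrow> 'x set \<Rightarrow> ('s \<Rightarrow> 'x \<Rightarrow> 'x option) \<Rightarrow> bool" where
  "representation S m e X \<alpha> \<longleftrightarrow>
     (\<forall>s\<in>S. partial_bij X (\<alpha> s)) \<and>
     (\<forall>s\<in>S. \<forall>t\<in>S. \<alpha> (m s t) = \<alpha> s \<circ>\<^sub>m \<alpha> t) \<and>
     \<alpha> e = id_on X"

text \<open>Image of B under the partial map f (used for B within the domain of f).\<close>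
definition pimg :: "('x \<Rightarrow> 'x option) \<Rightarrow> 'x set \<Rightarrow> 'x set" where
  "pimg f B = (\<lambda>x. the (f x)) ` B"

definition fin_add_measure :: "'x set \<Rightarrow> ('x set \<Rightarrow> ennreal) \<Rightarrow> bool" where
  "fin_add_measure X \<mu> \<longleftrightarrow> \<mu> {} = 0 \<and>
     (\<forall>A B. A \<subseteq> X \<longrightarrow> B \<subseteq> X \<longrightarrow> A \<inter> B = {} \<longrightarrow> \<mu> (A \<union> B) = \<mu> A + \<mu> B)"

definition domain_measurable ::
  "'s set \<Rightarrow> 'x set \<Rightarrow> ('s \<Rightarrow> 'x \<Rightarrow> 'x option) \<Rightarrow> 'x set \<Rightarrow> bool" where
  "domain_measurable S X \<alpha> A \<longleftrightarrow>
     (\<exists>\<mu>. fin_add_measure X \<mu> \<and> \<mu> A = 1 \<and>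
        (\<forall>s\<in>S. \<forall>B. B \<subseteq> dom (\<alpha> s) \<longrightarrow> \<mu> B = \<mu> (pimg (\<alpha> s) B)))"

definition domain_folner ::
  "'s set \<Rightarrow> ('s \<Rightarrow> 'x \<Rightarrow> 'x option) \<Rightarrow> 'x set \<Rightarrow> bool" where
  "domain_folner S \<alpha> A \<longleftrightarrow>
     (\<exists>F :: nat \<Rightarrow> 'x set. (\<forall>n. finite (F n) \<and> F n \<noteq> {} \<and> F n \<subseteq> A) \<and>
        (\<forall>s\<in>S. (\<lambda>n. real (card (pimg (\<alpha> s) (F n \<inter> dom (\<alpha> s)) - F n)) / real (card (F n)))
                   \<longlonglongrightarrow> 0))"

definition paradoxical ::
  "'s set \<Rightarrow> 'x set \<Rightarrow> ('s \<Rightarrow> 'x \<Rightarrow> 'x option) \<Rightarrow> 'x set \<Rightarrow> bool" where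
  "paradoxical S X \<alpha> A \<longleftrightarrow>
     (\<exists>(n::nat) (m::nat) (As :: nat \<Rightarrow> 'x set) (Bs :: nat \<Rightarrow> 'x set) (ss :: nat \<Rightarrow> 's) (ts :: nat \<Rightarrow> 's).
        (\<forall>i<n. ss i \<in> S \<and> As i \<subseteq> X \<and> As i \<subseteq> dom (\<alpha> (ss i))) \<and>
        (\<forall>j<m. ts j \<in> S \<and> Bs j \<subseteq> X \<and> Bs j \<subseteq> dom (\<alpha> (ts j))) \<and>
        A = (\<Union>i<n. pimg (\<alpha> (ss i)) (As i)) \<and>
        (\<forall>i<n. \<forall>i'<n. i \<noteq> i' \<longrightarrow> pimg (\<alpha> (ss i)) (As i) \<inter> pimg (\<alpha> (ss i')) (As i') = {}) \<and>
        A = (\<Union>j<m. pimg (\<alpha> (ts j)) (Bs j)) \<and>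
        (\<forall>j<m. \<forall>j'<m. j \<noteq> j' \<longrightarrow> pimg (\<alpha> (ts j)) (Bs j) \<inter> pimg (\<alpha> (ts j')) (Bs j') = {}) \<and>
        (\<Union>i<n. As i) \<union> (\<Union>j<m. Bs j) \<subseteq> A \<and>
        (\<forall>i<n. \<forall>i'<n. i \<noteq> i' \<longrightarrow> As i \<inter> As i' = {}) \<and>
        (\<forall>j<m. \<forall>j'<m. j \<noteq> j' \<longrightarrow> Bs j \<inter> Bs j' = {}) \<and>
        (\<forall>i<n. \<forall>j<m. As i \<inter> Bs j = {}))"

end

theory Submission
  imports Defs
begin

text \<open>
  Measurable implies not paradoxical: an invariant finitely additive measure with \<open>\<mu> X = 1\<close>
  gives both families of pieces of a paradoxical decomposition total measure 1, although they are
  disjoint subsets of \<open>X\<close>.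

  Folner implies measurable: along a Folner sequence \<open>F n\<close> the relative densities
  \<open>|B \<inter> F n| / |F n|\<close> are almost invariant under every \<open>\<alpha> s\<close>, so their limit along an
  ultrafilter on \<open>\<nat>\<close> is an invariant measure.

  Not paradoxical implies Folner: otherwise, \<open>S\<close> being countable, some finite \<open>K\<close> and
  \<open>\<epsilon> > 0\<close> make every finite \<open>F\<close> lose an \<open>\<epsilon>\<close>-fraction of its points under some
  \<open>\<alpha> s\<close>, \<open>s \<in> K\<close>. Iterating, a finite \<open>L \<subseteq> S\<close> satisfies \<open>|L F| \<ge> 2 |F|\<close> for
  all finite \<open>F\<close>, which is Hall's condition for matching each point of \<open>X \<times> {0, 1}\<close> to a
  point of \<open>L x\<close>. Hall's theorem (for infinite \<open>X\<close> by ultrafilter compactness) gives an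
  injective such matching, and undoing it with reverses of the finitely many elements of \<open>L\<close>
  cuts two disjoint copies of \<open>X\<close> out of \<open>X\<close>.
\<close>

section \<open>Ultrafilters\<close>

definition ultrafilter :: "'a filter \<Rightarrow> bool" where
  "ultrafilter U \<longleftrightarrow> U \<noteq> bot \<and> (\<forall>P. eventually P U \<or> eventually (\<lambda>x. \<not> P x) U)"

lemma Inf_chain_ne_bot:
  fixes C :: "'a filter set"
  assumes "C \<noteq> {}" "bot \<notin> C" and chain: "\<And>G H. G \<in> C \<Longrightarrow> H \<in> C \<Longrightarrow> G \<le> H \<or> H \<le> G"
  shows "Inf C \<noteq> bot"
proof -
  have "eventually P (Inf C) \<longleftrightarrow> (\<exists>G\<in>C. eventually P G)" for P
    by (rule eventually_Inf_base[OF assms(1)]) (metis chain inf.absorb1 inf.absorb2 order_refl)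
  then show ?thesis using assms(2) by (metis trivial_limit_def)
qed

lemma exists_ultrafilter_le:
  fixes F :: "'a filter"
  assumes "F \<noteq> bot"
  shows "\<exists>U. ultrafilter U \<and> U \<le> F"
proof -
  define A where "A = {G. G \<le> F \<and> G \<noteq> bot}"
  have "\<exists>U\<in>A. \<forall>G\<in>A. G \<le> U \<longrightarrow> G = U"
  proof (rule predicate_Zorn)
    show "partial_order_on A (relation_of (\<lambda>G H. H \<le> G) A)"
      by (rule partial_order_on_relation_ofI) auto
  next
    fix C assume "C \<in> Chains (relation_of (\<lambda>G H. H \<le> G) A)"
    then have CA: "C \<subseteq> A" and chain: "\<And>G H. G \<in> C \<Longrightarrow> H \<in> C \<Longrightarrow> G \<le> H \<or> H \<le> G"
      unfolding Chains_def relation_of_def by auto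
    show "\<exists>U\<in>A. \<forall>G\<in>C. U \<le> G"
    proof (cases "C = {}")
      case True
      then show ?thesis using assms A_def by auto
    next
      case False
      then obtain G where "G \<in> C" by blast
      have "Inf C \<le> F" using Inf_lower[OF \<open>G \<in> C\<close>] \<open>G \<in> C\<close> CA unfolding A_def by auto
      moreover have "Inf C \<noteq> bot" using False CA chain unfolding A_def by (intro Inf_chain_ne_bot) auto
      ultimately show ?thesis unfolding A_def by (auto intro: Inf_lower)
    qed
  qed
  then obtain U where U: "U \<le> F" "U \<noteq> bot" and max: "\<And>G. G \<le> U \<Longrightarrow> G \<noteq> bot \<Longrightarrow> G = U"
    unfolding A_def by (metis (mono_tags, lifting) mem_Collect_eq order_trans)
  have "eventually P U \<or> eventually (\<lambda>x. \<not> P x) U" for P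
  proof (rule disjCI)
    assume "\<not> eventually (\<lambda>x. \<not> P x) U"
    then have "inf U (principal {x. P x}) \<noteq> bot"
      by (simp add: trivial_limit_def eventually_inf_principal)
    then have "inf U (principal {x. P x}) = U" by (rule max[OF inf_le1])
    moreover have "eventually P (inf U (principal {x. P x}))"
      by (simp add: eventually_inf_principal)
    ultimately show "eventually P U" by simp
  qed
  then show ?thesis using U unfolding ultrafilter_def by blast
qed

lemma ultrafilter_finite_choice:
  assumes "ultrafilter U" "finite W" "eventually (\<lambda>x. \<exists>w\<in>W. P w x) U"
  shows "\<exists>w\<in>W. eventually (P w) U"
proof (rule ccontr)
  assume "\<not> ?thesis"
  then have "\<forall>w\<in>W. eventually (\<lambda>x. \<not> P w x) U" using assms(1) unfolding ultrafilter_def by blast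
  then have "eventually (\<lambda>x. \<forall>w\<in>W. \<not> P w x) U" using assms(2) by (simp add: eventually_ball_finite)
  with assms(3) have "eventually (\<lambda>_. False) U" by (rule eventually_elim2) blast
  then show False using assms(1) unfolding ultrafilter_def trivial_limit_def by simp
qed

lemma ultrafilter_le_of_inf_ne_bot:
  assumes "ultrafilter U" "inf F U \<noteq> bot"
  shows "U \<le> F"
proof (rule filter_leI)
  fix P assume "eventually P F"
  show "eventually P U"
  proof (rule ccontr)
    assume "\<not> eventually P U"
    then have "eventually (\<lambda>x. \<not> P x) U" using assms(1) unfolding ultrafilter_def by blast
    with \<open>eventually P F\<close> have "eventually (\<lambda>_. False) (inf F U)"
      by (auto simp: eventually_inf)
    then show False using assms(2) by (simp add: trivial_limit_def)
  qed
qed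

lemma ultrafilter_filtermap:
  "ultrafilter U \<Longrightarrow> ultrafilter (filtermap f U)"
  unfolding ultrafilter_def by (simp add: eventually_filtermap filtermap_bot_iff)

lemma ultrafilter_tendsto_Lim:
  fixes f :: "'a \<Rightarrow> real"
  assumes U: "ultrafilter U" and bounded: "\<And>x. \<bar>f x\<bar> \<le> M"
  shows "(f \<longlongrightarrow> Lim U f) U"
proof -
  have "eventually (\<lambda>y. y \<in> {-M..M}) (filtermap f U)"
    using bounded by (simp add: eventually_filtermap abs_le_iff minus_le_iff)
  moreover have "filtermap f U \<noteq> bot" using U unfolding ultrafilter_def by (simp add: filtermap_bot_iff)
  ultimately obtain r where "inf (nhds r) (filtermap f U) \<noteq> bot"
    using compact_filter[THEN iffD1, OF compact_Icc] by blast
  then have "(f \<longlongrightarrow> r) U"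
    unfolding filterlim_def by (rule ultrafilter_le_of_inf_ne_bot[OF ultrafilter_filtermap[OF U]])
  moreover have "U \<noteq> bot" using U unfolding ultrafilter_def by simp
  ultimately show ?thesis using tendsto_Lim by metis
qed

section \<open>Hall's marriage theorem\<close>

lemma marriage_critical_step:
  fixes I :: "'i set" and N :: "'i \<Rightarrow> 'a set"
  assumes IH: "\<And>J (N' :: 'i \<Rightarrow> 'a set). J \<subset> I \<Longrightarrow> \<forall>i\<in>J. finite (N' i) \<Longrightarrow> \<forall>J'\<subseteq>J. card J' \<le> card (\<Union>(N' ` J'))
                 \<Longrightarrow> \<exists>f. inj_on f J \<and> (\<forall>i\<in>J. f i \<in> N' i)"
    and fin: "finite I" and finN: "\<forall>i\<in>I. finite (N i)"
    and hall: "\<forall>J\<subseteq>I. card J \<le> card (\<Union>(N ` J))"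
    and G: "G \<subset> I" "G \<noteq> {}" and critical: "card (\<Union>(N ` G)) = card G"
  shows "\<exists>f. inj_on f I \<and> (\<forall>i\<in>I. f i \<in> N i)"
proof -
  define M where "M = \<Union>(N ` G)"
  define N' where "N' i = N i - M" for i
  have "\<forall>i\<in>G. finite (N i)" "\<forall>J\<subseteq>G. card J \<le> card (\<Union>(N ` J))"
    using G(1) finN hall by auto
  then obtain g where g: "inj_on g G" "\<forall>i\<in>G. g i \<in> N i" using IH[OF G(1), of N] by blast
  have "\<forall>J\<subseteq>I - G. card J \<le> card (\<Union>(N' ` J))"
  proof (intro allI impI)
    fix J assume J: "J \<subseteq> I - G"
    have JG: "J \<union> G \<subseteq> I" using J G(1) by auto
    have "finite J" "finite G" "J \<inter> G = {}"
      using finite_subset[OF J] finite_subset[OF psubset_imp_subset[OF G(1)]] fin J by auto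
    then have "card J + card G = card (J \<union> G)" by (simp add: card_Un_disjoint)
    also have "\<dots> \<le> card (\<Union>(N ` (J \<union> G)))" using hall JG by blast
    also have "\<Union>(N ` (J \<union> G)) = \<Union>(N' ` J) \<union> M" unfolding N'_def M_def by auto
    also have "card \<dots> \<le> card (\<Union>(N' ` J)) + card M" by (rule card_Un_le)
    finally show "card J \<le> card (\<Union>(N' ` J))" using critical M_def by simp
  qed
  moreover have "I - G \<subset> I" "\<forall>i\<in>I - G. finite (N' i)" using G finN N'_def by auto
  ultimately obtain h where h: "inj_on h (I - G)" "\<forall>i\<in>I - G. h i \<in> N' i"
    using IH[of "I - G" N'] by blast
  define f where "f i = (if i \<in> G then g i else h i)" for i
  have "f ` G \<subseteq> M" "f ` (I - G) \<inter> M = {}" using g h unfolding f_def M_def N'_def by auto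
  moreover have "inj_on f G" using g(1) inj_on_cong[of G f g] by (simp add: f_def)
  moreover have "inj_on f (I - G)" using h(1) inj_on_cong[of "I - G" f h] by (simp add: f_def)
  ultimately have "inj_on f (G \<union> (I - G))" unfolding inj_on_Un by blast
  moreover have "G \<union> (I - G) = I" using G(1) by auto
  moreover have "\<forall>i\<in>I. f i \<in> N i" using g h unfolding f_def N'_def by auto
  ultimately show ?thesis by auto
qed

lemma marriage_slack_step:
  fixes I :: "'i set" and N :: "'i \<Rightarrow> 'a set"
  assumes IH: "\<And>J (N' :: 'i \<Rightarrow> 'a set). J \<subset> I \<Longrightarrow> \<forall>i\<in>J. finite (N' i) \<Longrightarrow> \<forall>J'\<subseteq>J. card J' \<le> card (\<Union>(N' ` J'))
                 \<Longrightarrow> \<exists>f. inj_on f J \<and> (\<forall>i\<in>J. f i \<in> N' i)"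
    and fin: "finite I" and finN: "\<forall>i\<in>I. finite (N i)"
    and hall: "\<forall>J\<subseteq>I. card J \<le> card (\<Union>(N ` J))"
    and slack: "\<And>J. J \<subseteq> I \<Longrightarrow> J \<noteq> {} \<Longrightarrow> J \<noteq> I \<Longrightarrow> card J < card (\<Union>(N ` J))"
    and i: "i \<in> I"
  shows "\<exists>f. inj_on f I \<and> (\<forall>i\<in>I. f i \<in> N i)"
proof -
  have "card {i} \<le> card (\<Union>(N ` {i}))" using hall i by blast
  then have "N i \<noteq> {}" by auto
  then obtain w where w: "w \<in> N i" by blast
  define N' where "N' j = N j - {w}" for j
  have "\<forall>J\<subseteq>I - {i}. card J \<le> card (\<Union>(N' ` J))"
  proof (intro allI impI)
    fix J assume J: "J \<subseteq> I - {i}"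
    show "card J \<le> card (\<Union>(N' ` J))"
    proof (cases "J = {}")
      case False
      have "finite J" using J fin finite_subset by blast
      then have "finite (\<Union>(N ` J))" using J finN by blast
      moreover have "card J < card (\<Union>(N ` J))" using slack J False i by blast
      moreover have "\<Union>(N' ` J) = \<Union>(N ` J) - {w}" unfolding N'_def by auto
      ultimately show ?thesis by (auto simp: card_Diff_singleton_if)
    qed simp
  qed
  moreover have "I - {i} \<subset> I" "\<forall>j\<in>I - {i}. finite (N' j)" using i finN N'_def by auto
  ultimately obtain f where f: "inj_on f (I - {i})" "\<forall>j\<in>I - {i}. f j \<in> N' j"
    using IH[of "I - {i}" N'] by blast
  have "inj_on (f(i := w)) I"
  proof (rule inj_onI)
    fix x y assume "x \<in> I" "y \<in> I" "(f(i := w)) x = (f(i := w)) y"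
    then show "x = y" using f N'_def by (cases "x = i"; cases "y = i") (auto dest: inj_onD)
  qed
  moreover have "\<forall>j\<in>I. (f(i := w)) j \<in> N j" using f(2) w N'_def by auto
  ultimately show ?thesis by metis
qed

lemma marriage_finite:
  fixes I :: "'i set" and N :: "'i \<Rightarrow> 'a set"
  assumes "finite I" "\<forall>i\<in>I. finite (N i)" "\<forall>J\<subseteq>I. card J \<le> card (\<Union>(N ` J))"
  shows "\<exists>f. inj_on f I \<and> (\<forall>i\<in>I. f i \<in> N i)"
  using assms
proof (induction I arbitrary: N rule: finite_psubset_induct)
  case (psubset I)
  show ?case
  proof (cases "\<exists>G. G \<subset> I \<and> G \<noteq> {} \<and> card (\<Union>(N ` G)) = card G")
    case True
    then obtain G where "G \<subset> I" "G \<noteq> {}" "card (\<Union>(N ` G)) = card G" by blast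
    then show ?thesis using marriage_critical_step[OF psubset.IH psubset.hyps psubset.prems] by blast
  next
    case False
    show ?thesis
    proof (cases "I = {}")
      case nonempty: False
      then obtain i where "i \<in> I" by blast
      moreover have "card J < card (\<Union>(N ` J))" if "J \<subseteq> I" "J \<noteq> {}" "J \<noteq> I" for J
        using False psubset.prems(2) that by (metis le_neq_implies_less psubsetI)
      ultimately show ?thesis using marriage_slack_step[OF psubset.IH psubset.hyps psubset.prems] by blast
    qed simp
  qed
qed

lemma marriage:
  fixes I :: "'i set" and N :: "'i \<Rightarrow> 'a set"
  assumes finN: "\<forall>i\<in>I. finite (N i)"
    and hall: "\<And>J. finite J \<Longrightarrow> J \<subseteq> I \<Longrightarrow> card J \<le> card (\<Union>(N ` J))"
  shows "\<exists>f. inj_on f I \<and> (\<forall>i\<in>I. f i \<in> N i)"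
proof -
  have "\<exists>g. inj_on g J \<and> (\<forall>i\<in>J. g i \<in> N i)" if "finite J" "J \<subseteq> I" for J
    using marriage_finite[of J N] that finN hall by (meson finite_subset subsetD order_trans)
  then obtain g where g: "\<And>J. finite J \<Longrightarrow> J \<subseteq> I \<Longrightarrow> inj_on (g J) J \<and> (\<forall>i\<in>J. g J i \<in> N i)"
    by metis
  \<comment> \<open>An ultrafilter on the finite subsets of \<open>I\<close> picks a coherent limit of finite matchings.\<close>
  obtain U where U: "ultrafilter U" "U \<le> finite_subsets_at_top I"
    using exists_ultrafilter_le finite_subsets_at_top_neq_bot by blast
  have contains: "eventually (\<lambda>J. finite J \<and> J \<subseteq> I \<and> i \<in> J) U" if "i \<in> I" for i
  proof (rule filter_leD[OF U(2)])
    show "eventually (\<lambda>J. finite J \<and> J \<subseteq> I \<and> i \<in> J) (finite_subsets_at_top I)"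
      unfolding eventually_finite_subsets_at_top using that by (intro exI[of _ "{i}"]) auto
  qed
  have "\<exists>w\<in>N i. eventually (\<lambda>J. g J i = w) U" if "i \<in> I" for i
  proof (rule ultrafilter_finite_choice[OF U(1)])
    show "finite (N i)" using finN that by blast
    show "eventually (\<lambda>J. \<exists>w\<in>N i. g J i = w) U"
      using contains[OF that] by (rule eventually_mono) (use g in blast)
  qed
  then obtain f where f: "\<And>i. i \<in> I \<Longrightarrow> f i \<in> N i \<and> eventually (\<lambda>J. g J i = f i) U"
    by metis
  have "inj_on f I"
  proof (rule inj_onI)
    fix i i' assume i: "i \<in> I" "i' \<in> I" "f i = f i'"
    have "eventually (\<lambda>J. i = i') U"
      using contains[OF i(1)] contains[OF i(2)] conjunct2[OF f[OF i(1)]] conjunct2[OF f[OF i(2)]]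
      by eventually_elim (use g i(3) in \<open>metis inj_onD\<close>)
    then show "i = i'" using U(1) unfolding ultrafilter_def by simp
  qed
  then show ?thesis using f by blast
qed

section \<open>Invariant measures exclude paradoxical decompositions\<close>

lemma fin_add_measure_Un:
  "fin_add_measure X \<mu> \<Longrightarrow> A \<subseteq> X \<Longrightarrow> B \<subseteq> X \<Longrightarrow> A \<inter> B = {} \<Longrightarrow> \<mu> (A \<union> B) = \<mu> A + \<mu> B"
  unfolding fin_add_measure_def by blast

lemma fin_add_measure_Union:
  fixes n :: nat
  assumes \<mu>: "fin_add_measure X \<mu>" and sub: "\<forall>i<n. Y i \<subseteq> X"
    and disj: "\<forall>i<n. \<forall>j<n. i \<noteq> j \<longrightarrow> Y i \<inter> Y j = {}"
  shows "\<mu> (\<Union>i<n. Y i) = (\<Sum>i<n. \<mu> (Y i))"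
  using sub disj
proof (induction n)
  case 0
  then show ?case using \<mu> unfolding fin_add_measure_def by simp
next
  case (Suc n)
  have sub_n: "\<forall>i<n. Y i \<subseteq> X" and disj_n: "\<forall>i<n. \<forall>j<n. i \<noteq> j \<longrightarrow> Y i \<inter> Y j = {}"
    using Suc.prems less_SucI by blast+
  have "(\<Union>i<n. Y i) \<inter> Y n = {}" using Suc.prems(2) by (auto simp: less_Suc_eq)
  moreover have "(\<Union>i<n. Y i) \<subseteq> X" using sub_n by blast
  moreover have "Y n \<subseteq> X" using Suc.prems(1) by simp
  ultimately have "\<mu> ((\<Union>i<n. Y i) \<union> Y n) = \<mu> (\<Union>i<n. Y i) + \<mu> (Y n)"
    by (simp add: fin_add_measure_Un[OF \<mu>])
  moreover have "(\<Union>i<Suc n. Y i) = (\<Union>i<n. Y i) \<union> Y n" by (auto simp: lessThan_Suc)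
  ultimately show ?case using Suc.IH[OF sub_n disj_n] by simp
qed

lemma fin_add_measure_mono:
  assumes \<mu>: "fin_add_measure X \<mu>" and "A \<subseteq> B" "B \<subseteq> X"
  shows "\<mu> A \<le> \<mu> B"
proof -
  have "\<mu> B = \<mu> (A \<union> (B - A))" using assms(2) by (simp add: Un_absorb1)
  also have "\<dots> = \<mu> A + \<mu> (B - A)" using assms(2,3) by (intro fin_add_measure_Un[OF \<mu>]) auto
  finally show ?thesis by simp
qed

lemma invariant_measure_of_pieces:
  fixes n :: nat
  assumes \<mu>: "fin_add_measure X \<mu>"
    and inv: "\<forall>s\<in>S. \<forall>B. B \<subseteq> dom (\<alpha> s) \<longrightarrow> \<mu> B = \<mu> (pimg (\<alpha> s) B)"
    and pieces: "\<forall>i<n. ss i \<in> S \<and> A i \<subseteq> X \<and> A i \<subseteq> dom (\<alpha> (ss i))"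
    and images: "\<forall>i<n. pimg (\<alpha> (ss i)) (A i) \<subseteq> X"
    and disj: "\<forall>i<n. \<forall>j<n. i \<noteq> j \<longrightarrow> A i \<inter> A j = {}"
    and disj_images: "\<forall>i<n. \<forall>j<n. i \<noteq> j \<longrightarrow> pimg (\<alpha> (ss i)) (A i) \<inter> pimg (\<alpha> (ss j)) (A j) = {}"
  shows "\<mu> (\<Union>i<n. pimg (\<alpha> (ss i)) (A i)) = \<mu> (\<Union>i<n. A i)"
proof -
  have "\<mu> (\<Union>i<n. pimg (\<alpha> (ss i)) (A i)) = (\<Sum>i<n. \<mu> (pimg (\<alpha> (ss i)) (A i)))"
    using fin_add_measure_Union[OF \<mu> images disj_images] .
  also have "\<dots> = (\<Sum>i<n. \<mu> (A i))" using inv pieces by (intro sum.cong) auto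
  also have "\<dots> = \<mu> (\<Union>i<n. A i)" using fin_add_measure_Union[OF \<mu> _ disj] pieces by simp
  finally show ?thesis .
qed

theorem domain_measurable_imp_not_paradoxical:
  fixes S :: "'s set" and X :: "'x set" and \<alpha> :: "'s \<Rightarrow> 'x \<Rightarrow> 'x option"
  assumes "domain_measurable S X \<alpha> X"
  shows "\<not> paradoxical S X \<alpha> X"
proof
  assume "paradoxical S X \<alpha> X"
  then obtain n k :: nat and As Bs :: "nat \<Rightarrow> 'x set" and ss ts :: "nat \<Rightarrow> 's" where
      A: "\<forall>i<n. ss i \<in> S \<and> As i \<subseteq> X \<and> As i \<subseteq> dom (\<alpha> (ss i))"
    and B: "\<forall>j<k. ts j \<in> S \<and> Bs j \<subseteq> X \<and> Bs j \<subseteq> dom (\<alpha> (ts j))"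
    and XA: "X = (\<Union>i<n. pimg (\<alpha> (ss i)) (As i))"
    and disjA': "\<forall>i<n. \<forall>i'<n. i \<noteq> i' \<longrightarrow> pimg (\<alpha> (ss i)) (As i) \<inter> pimg (\<alpha> (ss i')) (As i') = {}"
    and XB: "X = (\<Union>j<k. pimg (\<alpha> (ts j)) (Bs j))"
    and disjB': "\<forall>j<k. \<forall>j'<k. j \<noteq> j' \<longrightarrow> pimg (\<alpha> (ts j)) (Bs j) \<inter> pimg (\<alpha> (ts j')) (Bs j') = {}"
    and sub: "(\<Union>i<n. As i) \<union> (\<Union>j<k. Bs j) \<subseteq> X"
    and disjA: "\<forall>i<n. \<forall>i'<n. i \<noteq> i' \<longrightarrow> As i \<inter> As i' = {}"
    and disjB: "\<forall>j<k. \<forall>j'<k. j \<noteq> j' \<longrightarrow> Bs j \<inter> Bs j' = {}"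
    and disjAB: "\<forall>i<n. \<forall>j<k. As i \<inter> Bs j = {}"
    unfolding paradoxical_def by (elim exE conjE) (rule that)
  obtain \<mu> where \<mu>: "fin_add_measure X \<mu>" "\<mu> X = 1"
    and inv: "\<forall>s\<in>S. \<forall>B. B \<subseteq> dom (\<alpha> s) \<longrightarrow> \<mu> B = \<mu> (pimg (\<alpha> s) B)"
    using assms unfolding domain_measurable_def by blast
  have "\<forall>i<n. pimg (\<alpha> (ss i)) (As i) \<subseteq> X" using XA by blast
  then have A1: "\<mu> X = \<mu> (\<Union>i<n. As i)"
    by (subst XA) (rule invariant_measure_of_pieces[OF \<mu>(1) inv A _ disjA disjA'])
  have "\<forall>j<k. pimg (\<alpha> (ts j)) (Bs j) \<subseteq> X" using XB by blast
  then have B1: "\<mu> X = \<mu> (\<Union>j<k. Bs j)"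
    by (subst XB) (rule invariant_measure_of_pieces[OF \<mu>(1) inv B _ disjB disjB'])
  have "(\<Union>i<n. As i) \<inter> (\<Union>j<k. Bs j) = {}" using disjAB by blast
  then have "\<mu> (\<Union>i<n. As i) + \<mu> (\<Union>j<k. Bs j) = \<mu> ((\<Union>i<n. As i) \<union> (\<Union>j<k. Bs j))"
    using sub by (intro fin_add_measure_Un[OF \<mu>(1), symmetric]) auto
  also have "\<dots> \<le> \<mu> X" by (rule fin_add_measure_mono[OF \<mu>(1) sub order_refl])
  finally have "\<mu> X + \<mu> X \<le> \<mu> X" by (simp only: A1[symmetric] B1[symmetric])
  then show False using \<mu>(2) by simp
qed

section \<open>Partial images and relative densities\<close>

definition pimage :: "('a \<Rightarrow> 'b option) \<Rightarrow> 'a set \<Rightarrow> 'b set" where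
  "pimage f B = {y. \<exists>x\<in>B. f x = Some y}"

lemma pimage_eq_image: "pimage f B = (\<lambda>x. the (f x)) ` (B \<inter> dom f)"
  unfolding pimage_def by force

lemma pimg_Int_dom: "pimg f (B \<inter> dom f) = pimage f B"
  unfolding pimg_def pimage_eq_image ..

lemma pimg_eq_pimage: "B \<subseteq> dom f \<Longrightarrow> pimg f B = pimage f B"
  using pimg_Int_dom[of f B] by (simp add: Int_absorb2)

lemma finite_pimage: "finite B \<Longrightarrow> finite (pimage f B)"
  unfolding pimage_eq_image by simp

lemma card_Int_le_card_pimage:
  assumes inj: "inj_on f (dom f)" and B: "B \<subseteq> dom f" and F: "finite F"
  shows "card (B \<inter> F) \<le> card (pimage f B \<inter> F) + card (pimage f F - F)"
proof -
  have "inj_on (\<lambda>x. the (f x)) (B \<inter> F)"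
  proof (rule inj_onI)
    fix x y assume xy: "x \<in> B \<inter> F" "y \<in> B \<inter> F" "the (f x) = the (f y)"
    then have "f x = f y" using B by (metis IntD1 domIff option.collapse subsetD)
    then show "x = y" using inj_onD[OF inj] xy B by blast
  qed
  then have "card (B \<inter> F) = card ((\<lambda>x. the (f x)) ` (B \<inter> F))" by (simp add: card_image)
  also have "\<dots> \<le> card ((pimage f B \<inter> F) \<union> (pimage f F - F))"
  proof (rule card_mono)
    show "finite ((pimage f B \<inter> F) \<union> (pimage f F - F))" using F finite_pimage by blast
    show "(\<lambda>x. the (f x)) ` (B \<inter> F) \<subseteq> (pimage f B \<inter> F) \<union> (pimage f F - F)"
      using B unfolding pimage_eq_image by blast
  qed
  also have "\<dots> \<le> card (pimage f B \<inter> F) + card (pimage f F - F)" by (rule card_Un_le)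
  finally show ?thesis .
qed

lemma pimage_reverse:
  assumes rev: "\<forall>x y. f x = Some y \<longrightarrow> g y = Some x" and B: "B \<subseteq> dom f"
  shows "pimage g (pimage f B) = B" and "pimage f B \<subseteq> dom g"
proof -
  show "pimage f B \<subseteq> dom g" unfolding pimage_def using rev by blast
  have "x \<in> pimage g (pimage f B) \<longleftrightarrow> x \<in> B" for x
  proof
    assume "x \<in> pimage g (pimage f B)"
    then obtain x' y where "x' \<in> B" "f x' = Some y" "g y = Some x" unfolding pimage_def by blast
    then show "x \<in> B" using rev by force
  next
    assume "x \<in> B"
    then obtain y where "f x = Some y" using B by blast
    then show "x \<in> pimage g (pimage f B)" using \<open>x \<in> B\<close> rev unfolding pimage_def by blast
  qed
  then show "pimage g (pimage f B) = B" by blast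
qed

definition rel_density :: "('i \<Rightarrow> 'x set) \<Rightarrow> 'x set \<Rightarrow> 'i \<Rightarrow> real" where
  "rel_density F B n = real (card (B \<inter> F n)) / real (card (F n))"

text \<open>Since \<open>x / 0 = 0\<close>, the bound needs no finiteness or non-emptiness of \<open>F n\<close>.\<close>

lemma rel_density_bounded: "\<bar>rel_density F B n\<bar> \<le> 1"
proof (cases "finite (F n)")
  case True
  then have "card (B \<inter> F n) \<le> card (F n)" by (simp add: card_mono)
  then show ?thesis unfolding rel_density_def by (auto simp: divide_le_eq_1)
qed (simp add: rel_density_def)

lemma rel_density_Un:
  "finite (F n) \<Longrightarrow> A \<inter> B = {} \<Longrightarrow> rel_density F (A \<union> B) n = rel_density F A n + rel_density F B n"
  unfolding rel_density_def
  by (simp add: Int_Un_distrib2 card_Un_disjoint disjoint_iff add_divide_distrib)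

definition boundary_ratio :: "('x \<Rightarrow> 'x option) \<Rightarrow> 'x set \<Rightarrow> real" where
  "boundary_ratio f F = real (card (pimage f F - F)) / real (card F)"

lemma rel_density_pimage_shift:
  assumes inj_f: "inj_on f (dom f)" and inj_g: "inj_on g (dom g)"
    and rev: "\<forall>x y. f x = Some y \<longrightarrow> g y = Some x"
    and B: "B \<subseteq> dom f" and F: "finite (F n)"
  shows "\<bar>rel_density F B n - rel_density F (pimage f B) n\<bar>
           \<le> boundary_ratio f (F n) + boundary_ratio g (F n)"
proof -
  have "card (B \<inter> F n) \<le> card (pimage f B \<inter> F n) + card (pimage f (F n) - F n)"
    using inj_f B F by (rule card_Int_le_card_pimage)
  moreover have "card (pimage f B \<inter> F n) \<le> card (B \<inter> F n) + card (pimage g (F n) - F n)"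
    using card_Int_le_card_pimage[OF inj_g pimage_reverse(2)[OF rev B] F]
    unfolding pimage_reverse(1)[OF rev B] .
  ultimately have "\<bar>real (card (B \<inter> F n)) - real (card (pimage f B \<inter> F n))\<bar>
      \<le> real (card (pimage f (F n) - F n)) + real (card (pimage g (F n) - F n))"
    by linarith
  then have "\<bar>real (card (B \<inter> F n)) - real (card (pimage f B \<inter> F n))\<bar> / real (card (F n))
      \<le> (real (card (pimage f (F n) - F n)) + real (card (pimage g (F n) - F n))) / real (card (F n))"
    by (rule divide_right_mono) simp
  then show ?thesis
    by (simp add: rel_density_def boundary_ratio_def diff_divide_distrib[symmetric] add_divide_distrib)
qed

lemma ultrafilter_tendsto_Lim_rel_density:
  "ultrafilter U \<Longrightarrow> (rel_density F B \<longlongrightarrow> Lim U (rel_density F B)) U"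
  by (rule ultrafilter_tendsto_Lim[OF _ rel_density_bounded])

lemma ultralimit_rel_density_fin_add_measure:
  fixes F :: "'i \<Rightarrow> 'x set"
  assumes U: "ultrafilter U" and F: "\<And>n. finite (F n)"
  shows "fin_add_measure X (\<lambda>B. ennreal (Lim U (rel_density F B)))"
  unfolding fin_add_measure_def
proof (intro conjI allI impI)
  have U_ne: "U \<noteq> bot" using U unfolding ultrafilter_def by simp
  have "rel_density F {} = (\<lambda>_. 0)" by (simp add: rel_density_def fun_eq_iff)
  then show "ennreal (Lim U (rel_density F {})) = 0" using U_ne by (simp add: tendsto_Lim[OF _ tendsto_const])
  fix A B :: "'x set" assume "A \<inter> B = {}"
  then have "rel_density F (A \<union> B) = (\<lambda>n. rel_density F A n + rel_density F B n)"
    using F by (simp add: rel_density_Un fun_eq_iff)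
  moreover have "((\<lambda>n. rel_density F A n + rel_density F B n)
      \<longlongrightarrow> Lim U (rel_density F A) + Lim U (rel_density F B)) U"
    using ultrafilter_tendsto_Lim_rel_density[OF U] ultrafilter_tendsto_Lim_rel_density[OF U]
    by (rule tendsto_add)
  ultimately have "(rel_density F (A \<union> B) \<longlongrightarrow> Lim U (rel_density F A) + Lim U (rel_density F B)) U"
    by simp
  then have "Lim U (rel_density F (A \<union> B)) = Lim U (rel_density F A) + Lim U (rel_density F B)"
    by (rule tendsto_Lim[OF U_ne])
  moreover have "0 \<le> Lim U (rel_density F C)" for C
    by (rule tendsto_lowerbound[OF ultrafilter_tendsto_Lim_rel_density[OF U]])
      (simp_all add: rel_density_def U_ne)
  ultimately show "ennreal (Lim U (rel_density F (A \<union> B)))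
      = ennreal (Lim U (rel_density F A)) + ennreal (Lim U (rel_density F B))"
    by (simp add: ennreal_plus)
qed

lemma Lim_eq_if_diff_tendsto_0:
  fixes f g :: "'a \<Rightarrow> real"
  assumes U: "ultrafilter U" and bounded: "\<And>x. \<bar>f x\<bar> \<le> M" and diff: "((\<lambda>x. f x - g x) \<longlongrightarrow> 0) U"
  shows "Lim U g = Lim U f"
proof -
  have "((\<lambda>x. f x - (f x - g x)) \<longlongrightarrow> Lim U f - 0) U"
    using ultrafilter_tendsto_Lim[OF U bounded] diff by (rule tendsto_diff)
  then have "(g \<longlongrightarrow> Lim U f) U" by simp
  moreover have "U \<noteq> bot" using U unfolding ultrafilter_def by simp
  ultimately show ?thesis by (intro tendsto_Lim)
qed

section \<open>Representations of inverse monoids\<close>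

locale inverse_monoid_rep =
  fixes S :: "'s set" and m :: "'s \<Rightarrow> 's \<Rightarrow> 's" and e :: 's
    and X :: "'x set" and \<alpha> :: "'s \<Rightarrow> 'x \<Rightarrow> 'x option"
  assumes inverse_monoid: "inverse_monoid S m e"
    and rep: "representation S m e X \<alpha>"
begin

lemma unit_mem: "e \<in> S"
  using inverse_monoid unfolding inverse_monoid_def by blast

lemma mult_mem: "s \<in> S \<Longrightarrow> t \<in> S \<Longrightarrow> m s t \<in> S"
  using inverse_monoid unfolding inverse_monoid_def by blast

lemma dom_subset: "s \<in> S \<Longrightarrow> dom (\<alpha> s) \<subseteq> X"
  using rep unfolding representation_def partial_bij_def by blast

lemma pimage_subset: "s \<in> S \<Longrightarrow> pimage (\<alpha> s) B \<subseteq> X"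
  using rep unfolding representation_def partial_bij_def pimage_def ran_def by blast

lemma inj_on_dom: "s \<in> S \<Longrightarrow> inj_on (\<alpha> s) (dom (\<alpha> s))"
  using rep unfolding representation_def partial_bij_def by blast

lemma pimage_unit: "B \<subseteq> X \<Longrightarrow> pimage (\<alpha> e) B = B"
  using rep unfolding representation_def id_on_def pimage_def by auto

lemma mult_apply:
  "s \<in> S \<Longrightarrow> t \<in> S \<Longrightarrow> \<alpha> t x = Some y \<Longrightarrow> \<alpha> s y = Some z \<Longrightarrow> \<alpha> (m s t) x = Some z"
  using rep unfolding representation_def by (simp add: map_comp_def)

lemma reverse_exists:
  assumes s: "s \<in> S"
  shows "\<exists>t\<in>S. \<forall>x y. \<alpha> s x = Some y \<longrightarrow> \<alpha> t y = Some x"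
proof -
  obtain t where t: "t \<in> S" "m (m s t) s = s"
    using inverse_monoid s unfolding inverse_monoid_def by blast
  have "\<alpha> t y = Some x" if xy: "\<alpha> s x = Some y" for x y
  proof -
    have comp: "\<alpha> (m (m s t) s) = \<alpha> s \<circ>\<^sub>m \<alpha> t \<circ>\<^sub>m \<alpha> s"
      using rep s t(1) mult_mem unfolding representation_def by simp
    have "\<alpha> (m (m s t) s) x = Some y" using xy t(2) by simp
    then obtain w where w: "\<alpha> t y = Some w" "\<alpha> s w = Some y"
      using xy unfolding comp by (auto simp: map_comp_Some_iff)
    then have "w = x" using xy by (intro inj_onD[OF inj_on_dom[OF s]]) auto
    then show ?thesis using w by simp
  qed
  then show ?thesis using t(1) by blast
qed

theorem domain_folner_imp_domain_measurable:
  assumes "domain_folner S \<alpha> X"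
  shows "domain_measurable S X \<alpha> X"
proof -
  obtain F :: "nat \<Rightarrow> 'x set" where F': "\<forall>n. finite (F n) \<and> F n \<noteq> {} \<and> F n \<subseteq> X"
    and lim: "\<forall>s\<in>S. (\<lambda>n. real (card (pimg (\<alpha> s) (F n \<inter> dom (\<alpha> s)) - F n)) / real (card (F n)))
                   \<longlonglongrightarrow> 0"
    using assms unfolding domain_folner_def by blast
  have F: "\<And>n. finite (F n)" "\<And>n. F n \<noteq> {}" "\<And>n. F n \<subseteq> X" using F' by blast+
  have folner: "(\<lambda>n. boundary_ratio (\<alpha> s) (F n)) \<longlonglongrightarrow> 0" if "s \<in> S" for s
    using lim that unfolding boundary_ratio_def pimg_Int_dom by blast
  obtain U where U: "ultrafilter U" "U \<le> sequentially"
    using exists_ultrafilter_le sequentially_bot by blast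
  define \<mu> where "\<mu> B = ennreal (Lim U (rel_density F B))" for B
  have "fin_add_measure X \<mu>"
    unfolding \<mu>_def using ultralimit_rel_density_fin_add_measure[OF U(1) F(1)] .
  moreover have "\<mu> X = 1"
  proof -
    have "rel_density F X = (\<lambda>_. 1)"
      using F by (simp add: rel_density_def fun_eq_iff Int_absorb1 card_gt_0_iff)
    then show ?thesis using U(1) unfolding \<mu>_def ultrafilter_def by (simp add: tendsto_Lim[OF _ tendsto_const])
  qed
  moreover have "\<mu> B = \<mu> (pimg (\<alpha> s) B)" if s: "s \<in> S" and B: "B \<subseteq> dom (\<alpha> s)" for s B
  proof -
    obtain t where t: "t \<in> S" "\<forall>x y. \<alpha> s x = Some y \<longrightarrow> \<alpha> t y = Some x"
      using reverse_exists[OF s] by blast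
    have shift: "\<bar>rel_density F B n - rel_density F (pimage (\<alpha> s) B) n\<bar>
        \<le> boundary_ratio (\<alpha> s) (F n) + boundary_ratio (\<alpha> t) (F n)" for n
      using inj_on_dom[OF s] inj_on_dom[OF t(1)] t(2) B F(1) by (rule rel_density_pimage_shift)
    have "((\<lambda>n. boundary_ratio (\<alpha> s) (F n) + boundary_ratio (\<alpha> t) (F n)) \<longlongrightarrow> 0) sequentially"
      using tendsto_add[OF folner[OF s] folner[OF t(1)]] by simp
    then have "((\<lambda>n. rel_density F B n - rel_density F (pimage (\<alpha> s) B) n) \<longlongrightarrow> 0) sequentially"
      by (rule Lim_null_comparison[rotated]) (simp add: shift)
    then have "Lim U (rel_density F (pimage (\<alpha> s) B)) = Lim U (rel_density F B)"
      by (intro Lim_eq_if_diff_tendsto_0[OF U(1) rel_density_bounded] tendsto_mono[OF U(2)])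
    then show ?thesis unfolding \<mu>_def pimg_eq_pimage[OF B] by simp
  qed
  ultimately show ?thesis unfolding domain_measurable_def by blast
qed

end

section \<open>Without Folner sets there is a paradoxical decomposition\<close>

lemma domain_folnerI:
  fixes S :: "'s set" and \<alpha> :: "'s \<Rightarrow> 'x \<Rightarrow> 'x option"
  assumes S: "countable S" "S \<noteq> {}"
    and almost_invariant: "\<And>K \<epsilon>. finite K \<Longrightarrow> K \<subseteq> S \<Longrightarrow> \<epsilon> > 0 \<Longrightarrow>
      \<exists>F. finite F \<and> F \<noteq> {} \<and> F \<subseteq> A \<and> (\<forall>s\<in>K. real (card (pimage (\<alpha> s) F - F)) \<le> \<epsilon> * real (card F))"
  shows "domain_folner S \<alpha> A"
proof -
  define enum where "enum = from_nat_into S"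
  have enum: "range enum = S" unfolding enum_def using S by simp
  have "\<exists>F. finite F \<and> F \<noteq> {} \<and> F \<subseteq> A \<and>
      (\<forall>s\<in>enum ` {..n}. real (card (pimage (\<alpha> s) F - F)) \<le> inverse (real (Suc n)) * real (card F))" for n
    using enum by (intro almost_invariant) auto
  then obtain F where F: "\<And>n. finite (F n)" "\<And>n. F n \<noteq> {}" "\<And>n. F n \<subseteq> A"
    and small: "\<And>n s. s \<in> enum ` {..n} \<Longrightarrow>
      real (card (pimage (\<alpha> s) (F n) - F n)) \<le> inverse (real (Suc n)) * real (card (F n))"
    by metis
  have "(\<lambda>n. real (card (pimage (\<alpha> s) (F n) - F n)) / real (card (F n))) \<longlonglongrightarrow> 0" if "s \<in> S" for s
  proof (rule tendsto_sandwich[OF _ _ tendsto_const LIMSEQ_inverse_real_of_nat])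
    obtain k where k: "s = enum k" using enum \<open>s \<in> S\<close> by blast
    have "real (card (F n)) > 0" for n using F by (simp add: card_gt_0_iff)
    then show "eventually (\<lambda>n. real (card (pimage (\<alpha> s) (F n) - F n)) / real (card (F n))
        \<le> inverse (real (Suc n))) sequentially"
      unfolding eventually_sequentially
    proof (intro exI allI impI)
      fix n assume "k \<le> n"
      then have "s \<in> enum ` {..n}" using k by simp
      then show "real (card (pimage (\<alpha> s) (F n) - F n)) / real (card (F n)) \<le> inverse (real (Suc n))"
        using small \<open>real (card (F n)) > 0\<close> by (simp add: pos_divide_le_eq)
    qed
  qed simp
  then show ?thesis
    unfolding domain_folner_def pimg_Int_dom using F by blast
qed

definition nbhd :: "('s \<Rightarrow> 'x \<Rightarrow> 'x option) \<Rightarrow> 's set \<Rightarrow> 'x set \<Rightarrow> 'x set" where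
  "nbhd \<alpha> L F = (\<Union>t\<in>L. pimage (\<alpha> t) F)"

lemma finite_nbhd: "finite L \<Longrightarrow> finite F \<Longrightarrow> finite (nbhd \<alpha> L F)"
  unfolding nbhd_def by (simp add: finite_pimage)

lemma piecewise_inverse_decomposition:
  fixes f :: "nat \<Rightarrow> 'x \<Rightarrow> 'x option" and \<psi> :: "'x \<Rightarrow> 'x" and n :: nat
  assumes inj: "inj_on \<psi> X" and recovers: "\<And>x. x \<in> X \<Longrightarrow> \<exists>i<n. f i (\<psi> x) = Some x"
  shows "\<exists>P. (\<forall>i<n. P i \<subseteq> dom (f i)) \<and> X = (\<Union>i<n. pimg (f i) (P i))
    \<and> (\<forall>i<n. \<forall>j<n. i \<noteq> j \<longrightarrow> pimg (f i) (P i) \<inter> pimg (f j) (P j) = {})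
    \<and> (\<forall>i<n. \<forall>j<n. i \<noteq> j \<longrightarrow> P i \<inter> P j = {}) \<and> (\<Union>i<n. P i) \<subseteq> \<psi> ` X"
proof -
  define idx where "idx x = (LEAST i. i < n \<and> f i (\<psi> x) = Some x)" for x
  have idx: "idx x < n \<and> f (idx x) (\<psi> x) = Some x" if "x \<in> X" for x
    unfolding idx_def by (rule LeastI_ex) (use recovers[OF that] in blast)
  define P where "P i = \<psi> ` {x \<in> X. idx x = i}" for i
  have dom: "P i \<subseteq> dom (f i)" for i
  proof
    fix y assume "y \<in> P i"
    then obtain x where "x \<in> X" "idx x = i" "y = \<psi> x" unfolding P_def by blast
    then show "y \<in> dom (f i)" using idx[of x] by auto
  qed
  have img: "pimg (f i) (P i) = {x \<in> X. idx x = i}" for i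
  proof -
    have "pimage (f i) (P i) = {x \<in> X. idx x = i}"
    proof (intro set_eqI iffI)
      fix y assume "y \<in> pimage (f i) (P i)"
      then obtain x where "x \<in> X" "idx x = i" "f i (\<psi> x) = Some y" unfolding P_def pimage_def by blast
      then show "y \<in> {x \<in> X. idx x = i}" using idx[of x] by auto
    next
      fix y assume "y \<in> {x \<in> X. idx x = i}"
      then show "y \<in> pimage (f i) (P i)" using idx[of y] unfolding P_def pimage_def by auto
    qed
    then show ?thesis by (simp add: pimg_eq_pimage[OF dom])
  qed
  have cover: "X = (\<Union>i<n. pimg (f i) (P i))" unfolding img using idx by auto
  have disjoint: "P i \<inter> P j = {}" if "i \<noteq> j" for i j
  proof -
    have "\<psi> x \<noteq> \<psi> y" if "x \<in> X" "y \<in> X" "idx x = i" "idx y = j" for x y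
      using that \<open>i \<noteq> j\<close> inj_onD[OF inj, of x y] by auto
    then show ?thesis unfolding P_def by blast
  qed
  have "(\<Union>i<n. P i) \<subseteq> \<psi> ` X" unfolding P_def by blast
  moreover have "pimg (f i) (P i) \<inter> pimg (f j) (P j) = {}" if "i \<noteq> j" for i j
    unfolding img using that by blast
  ultimately show ?thesis using dom disjoint by (intro exI[of _ P] conjI allI impI cover) auto
qed

context inverse_monoid_rep
begin

lemma nbhd_subset: "L \<subseteq> S \<Longrightarrow> nbhd \<alpha> L F \<subseteq> X"
  unfolding nbhd_def using pimage_subset by blast

lemma nbhd_unit: "F \<subseteq> X \<Longrightarrow> nbhd \<alpha> {e} F = F"
  unfolding nbhd_def by (simp add: pimage_unit)

lemma nbhd_nbhd:
  assumes "K \<subseteq> S" "L \<subseteq> S"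
  shows "nbhd \<alpha> K (nbhd \<alpha> L F) \<subseteq> nbhd \<alpha> ((\<lambda>(s, t). m s t) ` (K \<times> L)) F"
proof
  fix z assume "z \<in> nbhd \<alpha> K (nbhd \<alpha> L F)"
  then obtain s t x y where "s \<in> K" "t \<in> L" "x \<in> F" "\<alpha> t x = Some y" "\<alpha> s y = Some z"
    unfolding nbhd_def pimage_def by blast
  moreover have "\<alpha> (m s t) x = Some z" using calculation assms by (intro mult_apply) auto
  ultimately show "z \<in> nbhd \<alpha> ((\<lambda>(s, t). m s t) ` (K \<times> L)) F"
    unfolding nbhd_def pimage_def by force
qed

lemma nbhd_growth_power:
  assumes K: "finite K" "K \<subseteq> S" and c: "c \<ge> 0"
    and grows: "\<And>F. finite F \<Longrightarrow> F \<subseteq> X \<Longrightarrow> c * real (card F) \<le> real (card (nbhd \<alpha> K F))"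
  shows "\<exists>L. finite L \<and> L \<subseteq> S \<and>
    (\<forall>F. finite F \<longrightarrow> F \<subseteq> X \<longrightarrow> c ^ k * real (card F) \<le> real (card (nbhd \<alpha> L F)))"
proof (induction k)
  case 0
  show ?case using unit_mem nbhd_unit by (intro exI[of _ "{e}"]) auto
next
  case (Suc k)
  then obtain L where L: "finite L" "L \<subseteq> S"
    and IH: "\<And>F. finite F \<Longrightarrow> F \<subseteq> X \<Longrightarrow> c ^ k * real (card F) \<le> real (card (nbhd \<alpha> L F))"
    by blast
  define L' where "L' = (\<lambda>(s, t). m s t) ` (K \<times> L)"
  have L': "finite L'" "L' \<subseteq> S" unfolding L'_def using K L mult_mem by auto
  have "c ^ Suc k * real (card F) \<le> real (card (nbhd \<alpha> L' F))" if F: "finite F" "F \<subseteq> X" for F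
  proof -
    have G: "finite (nbhd \<alpha> L F)" "nbhd \<alpha> L F \<subseteq> X" using finite_nbhd L F nbhd_subset by auto
    have "c ^ Suc k * real (card F) = c * (c ^ k * real (card F))" by simp
    also have "\<dots> \<le> c * real (card (nbhd \<alpha> L F))" using IH[OF F] c by (rule mult_left_mono)
    also have "\<dots> \<le> real (card (nbhd \<alpha> K (nbhd \<alpha> L F)))" using grows[OF G] .
    also have "\<dots> \<le> real (card (nbhd \<alpha> L' F))"
      unfolding L'_def using nbhd_nbhd[OF K(2) L(2)] finite_nbhd[OF L'(1) F(1)]
      by (simp add: card_mono L'_def)
    finally show ?thesis .
  qed
  then show ?case using L' by blast
qed

lemma expansion_imp_doubling:
  assumes K: "finite K" "K \<subseteq> S" and \<epsilon>: "\<epsilon> > 0"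
    and expands: "\<And>F. finite F \<Longrightarrow> F \<noteq> {} \<Longrightarrow> F \<subseteq> X \<Longrightarrow>
      \<exists>s\<in>K. \<epsilon> * real (card F) < real (card (pimage (\<alpha> s) F - F))"
  shows "\<exists>L. finite L \<and> L \<subseteq> S \<and> (\<forall>F. finite F \<longrightarrow> F \<subseteq> X \<longrightarrow> 2 * card F \<le> card (nbhd \<alpha> L F))"
proof -
  \<comment> \<open>With the unit added, \<open>F\<close> and the escaping points \<open>\<alpha> s F - F\<close> both lie in the neighbourhood.\<close>
  have K': "finite (insert e K)" "insert e K \<subseteq> S" using K unit_mem by auto
  have "(1 + \<epsilon>) * real (card F) \<le> real (card (nbhd \<alpha> (insert e K) F))" if F: "finite F" "F \<subseteq> X" for F
  proof (cases "F = {}")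
    case False
    then obtain s where s: "s \<in> K" "\<epsilon> * real (card F) < real (card (pimage (\<alpha> s) F - F))"
      using expands F by blast
    have "F \<union> (pimage (\<alpha> s) F - F) \<subseteq> nbhd \<alpha> (insert e K) F"
      using nbhd_unit[OF F(2)] s(1) unfolding nbhd_def by auto
    then have "card (F \<union> (pimage (\<alpha> s) F - F)) \<le> card (nbhd \<alpha> (insert e K) F)"
      using finite_nbhd[OF K'(1) F(1)] by (rule card_mono[rotated])
    moreover have "card (F \<union> (pimage (\<alpha> s) F - F)) = card F + card (pimage (\<alpha> s) F - F)"
      using F finite_pimage by (intro card_Un_disjoint) auto
    ultimately show ?thesis using s(2) by (simp add: distrib_right)
  qed simp
  moreover obtain k where k: "2 < (1 + \<epsilon>) ^ k" using real_arch_pow[of "1 + \<epsilon>" 2] \<epsilon> by auto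
  ultimately obtain L where L: "finite L" "L \<subseteq> S"
    and grows: "\<forall>F. finite F \<longrightarrow> F \<subseteq> X \<longrightarrow> (1 + \<epsilon>) ^ k * real (card F) \<le> real (card (nbhd \<alpha> L F))"
    using nbhd_growth_power[OF K', of "1 + \<epsilon>" k] \<epsilon> by auto
  have "2 * card F \<le> card (nbhd \<alpha> L F)" if "finite F" "F \<subseteq> X" for F
  proof -
    have "2 * real (card F) \<le> (1 + \<epsilon>) ^ k * real (card F)" using k by (intro mult_right_mono) auto
    also have "\<dots> \<le> real (card (nbhd \<alpha> L F))" using grows that by blast
    finally show ?thesis by linarith
  qed
  then show ?thesis using L by blast
qed

lemma reverse_enumeration:
  assumes "finite L" "L \<subseteq> S"
  shows "\<exists>(n :: nat) ts. (\<forall>i<n. ts i \<in> S)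
    \<and> (\<forall>t\<in>L. \<exists>i<n. \<forall>x y. \<alpha> t x = Some y \<longrightarrow> \<alpha> (ts i) y = Some x)"
proof -
  obtain ls where ls: "set ls = L" using finite_list assms(1) by blast
  obtain rev where rev: "\<forall>t\<in>S. rev t \<in> S \<and> (\<forall>x y. \<alpha> t x = Some y \<longrightarrow> \<alpha> (rev t) y = Some x)"
    using reverse_exists by metis
  have "\<forall>i<length ls. rev (ls ! i) \<in> S" using rev ls assms(2) nth_mem by blast
  moreover have "\<exists>i<length ls. \<forall>x y. \<alpha> t x = Some y \<longrightarrow> \<alpha> (rev (ls ! i)) y = Some x" if t: "t \<in> L" for t
  proof -
    obtain i where "i < length ls" "ls ! i = t" using t ls by (auto simp: in_set_conv_nth)
    then show ?thesis using rev t assms(2) by blast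
  qed
  ultimately show ?thesis by (intro exI[of _ "length ls"] exI[of _ "\<lambda>i. rev (ls ! i)"]) blast
qed

lemma two_to_one_imp_paradoxical:
  fixes \<phi> :: "'x \<times> bool \<Rightarrow> 'x" and n :: nat
  assumes ts: "\<forall>i<n. ts i \<in> S" and \<phi>: "inj_on \<phi> (X \<times> UNIV)"
    and recovers: "\<And>x b. x \<in> X \<Longrightarrow> \<exists>i<n. \<alpha> (ts i) (\<phi> (x, b)) = Some x"
  shows "paradoxical S X \<alpha> X"
proof -
  have half_X: "\<phi> (x, b) \<in> X" if x: "x \<in> X" for x b
  proof -
    obtain i where "i < n" "\<alpha> (ts i) (\<phi> (x, b)) = Some x" using recovers[OF x] by blast
    then show ?thesis using dom_subset ts by blast
  qed
  have inj: "inj_on (\<lambda>x. \<phi> (x, b)) X" for b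
  proof (rule inj_onI)
    fix x y assume "x \<in> X" "y \<in> X" "\<phi> (x, b) = \<phi> (y, b)"
    then have "(x, b) = (y, b)" by (intro inj_onD[OF \<phi>]) auto
    then show "x = y" by simp
  qed
  obtain P where P: "\<forall>i<n. P i \<subseteq> dom (\<alpha> (ts i))" "X = (\<Union>i<n. pimg (\<alpha> (ts i)) (P i))"
      "\<forall>i<n. \<forall>j<n. i \<noteq> j \<longrightarrow> pimg (\<alpha> (ts i)) (P i) \<inter> pimg (\<alpha> (ts j)) (P j) = {}"
      "\<forall>i<n. \<forall>j<n. i \<noteq> j \<longrightarrow> P i \<inter> P j = {}" "(\<Union>i<n. P i) \<subseteq> (\<lambda>x. \<phi> (x, False)) ` X"
    using piecewise_inverse_decomposition[OF inj[of False] recovers[of _ False]] by blast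
  obtain Q where Q: "\<forall>i<n. Q i \<subseteq> dom (\<alpha> (ts i))" "X = (\<Union>i<n. pimg (\<alpha> (ts i)) (Q i))"
      "\<forall>i<n. \<forall>j<n. i \<noteq> j \<longrightarrow> pimg (\<alpha> (ts i)) (Q i) \<inter> pimg (\<alpha> (ts j)) (Q j) = {}"
      "\<forall>i<n. \<forall>j<n. i \<noteq> j \<longrightarrow> Q i \<inter> Q j = {}" "(\<Union>i<n. Q i) \<subseteq> (\<lambda>x. \<phi> (x, True)) ` X"
    using piecewise_inverse_decomposition[OF inj[of True] recovers[of _ True]] by blast
  have "\<phi> (x, False) \<noteq> \<phi> (y, True)" if "x \<in> X" "y \<in> X" for x y
    using inj_onD[OF \<phi>, of "(x, False)" "(y, True)"] that by auto
  then have "(\<lambda>x. \<phi> (x, False)) ` X \<inter> (\<lambda>x. \<phi> (x, True)) ` X = {}" by blast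
  then have PQ: "\<forall>i<n. \<forall>j<n. P i \<inter> Q j = {}" using P(5) Q(5) by blast
  have sub: "(\<Union>i<n. P i) \<union> (\<Union>j<n. Q j) \<subseteq> X" using P(5) Q(5) half_X by blast
  then have P_pieces: "\<forall>i<n. ts i \<in> S \<and> P i \<subseteq> X \<and> P i \<subseteq> dom (\<alpha> (ts i))"
    and Q_pieces: "\<forall>i<n. ts i \<in> S \<and> Q i \<subseteq> X \<and> Q i \<subseteq> dom (\<alpha> (ts i))"
    using ts P(1) Q(1) by blast+
  show ?thesis
    unfolding paradoxical_def
    by (rule exI[of _ n], rule exI[of _ n], rule exI[of _ P], rule exI[of _ Q], rule exI[of _ ts], rule exI[of _ ts]) (intro conjI P_pieces Q_pieces P(2) P(3) Q(2) Q(3) sub P(4) Q(4) PQ)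
qed

lemma doubling_imp_paradoxical:
  assumes L: "finite L" "L \<subseteq> S"
    and doubling: "\<And>F. finite F \<Longrightarrow> F \<subseteq> X \<Longrightarrow> 2 * card F \<le> card (nbhd \<alpha> L F)"
  shows "paradoxical S X \<alpha> X"
proof -
  define N where "N v = nbhd \<alpha> L {fst v}" for v :: "'x \<times> bool"
  have "\<exists>\<phi>. inj_on \<phi> (X \<times> UNIV) \<and> (\<forall>v\<in>X \<times> UNIV. \<phi> v \<in> N v)"
  proof (rule marriage)
    show "\<forall>v\<in>X \<times> UNIV. finite (N v)" using finite_nbhd L(1) unfolding N_def by blast
    fix G :: "('x \<times> bool) set" assume G: "finite G" "G \<subseteq> X \<times> UNIV"
    have "G \<subseteq> fst ` G \<times> (UNIV :: bool set)" by force
    then have "card G \<le> card (fst ` G \<times> (UNIV :: bool set))"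
      using G(1) by (intro card_mono) auto
    also have "\<dots> = 2 * card (fst ` G)" by (simp add: card_cartesian_product)
    also have "\<dots> \<le> card (nbhd \<alpha> L (fst ` G))" using G by (intro doubling) auto
    also have "nbhd \<alpha> L (fst ` G) = \<Union>(N ` G)" unfolding N_def nbhd_def pimage_def by blast
    finally show "card G \<le> card (\<Union>(N ` G))" .
  qed
  then obtain \<phi> where \<phi>: "inj_on \<phi> (X \<times> UNIV)" "\<forall>v\<in>X \<times> UNIV. \<phi> v \<in> N v" by blast
  obtain n :: nat and ts where ts: "\<forall>i<n. ts i \<in> S"
    and reverses: "\<forall>t\<in>L. \<exists>i<n. \<forall>x y. \<alpha> t x = Some y \<longrightarrow> \<alpha> (ts i) y = Some x"
    using reverse_enumeration[OF L] by blast
  have "\<exists>i<n. \<alpha> (ts i) (\<phi> (x, b)) = Some x" if x: "x \<in> X" for x b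
  proof -
    obtain t where "t \<in> L" "\<alpha> t x = Some (\<phi> (x, b))"
      using \<phi>(2) x unfolding N_def nbhd_def pimage_def by auto
    then show ?thesis using reverses by blast
  qed
  then show ?thesis by (rule two_to_one_imp_paradoxical[OF ts \<phi>(1)])
qed

end

theorem mainTheorem4:
  fixes S :: "'s set" and m :: "'s \<Rightarrow> 's \<Rightarrow> 's" and e :: 's
    and X :: "'x set" and \<alpha> :: "'s \<Rightarrow> 'x \<Rightarrow> 'x option"
  assumes "inverse_monoid S m e"
    and "countable S"
    and "representation S m e X \<alpha>"
  shows "(domain_measurable S X \<alpha> X \<longleftrightarrow> \<not> paradoxical S X \<alpha> X)
       \<and> (\<not> paradoxical S X \<alpha> X \<longleftrightarrow> domain_folner S \<alpha> X)"
proof -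
  interpret inverse_monoid_rep S m e X \<alpha> using assms(1,3) by unfold_locales
  have "paradoxical S X \<alpha> X" if not_folner: "\<not> domain_folner S \<alpha> X"
  proof -
    have "S \<noteq> {}" using unit_mem by blast
    then obtain K \<epsilon> where K: "finite K" "K \<subseteq> S" "\<epsilon> > 0"
      and expands: "\<forall>F. finite F \<and> F \<noteq> {} \<and> F \<subseteq> X \<longrightarrow>
        (\<exists>s\<in>K. \<epsilon> * real (card F) < real (card (pimage (\<alpha> s) F - F)))"
      using domain_folnerI[OF assms(2)] not_folner by (meson not_le)
    then obtain L where "finite L" "L \<subseteq> S"
      and "\<forall>F. finite F \<longrightarrow> F \<subseteq> X \<longrightarrow> 2 * card F \<le> card (nbhd \<alpha> L F)"
      using expansion_imp_doubling[OF K] by blast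
    then show ?thesis using doubling_imp_paradoxical by blast
  qed
  then show ?thesis
    using domain_measurable_imp_not_paradoxical domain_folner_imp_domain_measurable by blast
qed

end
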